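(* Let $p>1$ and let $\varphi:\mathbb R\to\mathbb C$ satisfy $|\varphi(x)|\le Ce^{-|x|}$ for some $C>0$. For each $u_0\in B_p^{\mathbb R}(\mathbb R)$ there exists a constant $C(u_0)>0$ such that every $u\in B_p(\mathbb R)$ with $\|u-u_0\|_{B_p}\le C_{JN}/4$ satisfies $$\frac1{|I|}\int_Ie^{|u(t)-u_I|}dt\le C(u_0)$$ for all bounded intervals $I\subset\mathbb R$. Likewise, there is a constant $C'(u_0)>0$ such that every such $u$ satisfies $\int_{\mathbb R}|\varphi_y(x-t)|e^{|u(t)-u_{I(x,y)}|}dt\le C'(u_0)$ for all $x\in\mathbb R$, $y>0$.
   Context: $B_p(\mathbb R)$: measurable $u:\mathbb R\to\mathbb C$ (modulo constants) with $\|u\|_{B_p}^p=\int\!\int\frac{|u(t)-u(s)|^p}{|t-s|^2}dsdt<\infty$; $B_p^{\mathbb R}(\mathbb R)$ its real-valued elements. $u_I=|I|^{-1}\int_Iu$; $\|u\|_*=\sup_I|I|^{-1}\int_I|u-u_I|$. $C_0,C_{JN}>0$ are universal constants with $|I|^{-1}|\{t\in I:|u(t)-u_I|\ge\lambda\}|\le C_0\exp(-C_{JN}\lambda/\|u\|_* )$ for all BMO $u$, bounded $I$, $\lambda>0$. $\varphi_y(x)=y^{-1}\varphi(x/y)$, $I(x,y)=(x-y,x+y)$. *)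

theory Defs
  imports "HOL-Analysis.Analysis"
begin

definition Bp_energy :: "real \<Rightarrow> (real \<Rightarrow> complex) \<Rightarrow> ennreal" where
  "Bp_energy p u = (\<integral>\<^sup>+ t. (\<integral>\<^sup>+ s. ennreal (cmod (u t - u s) powr p / \<bar>t - s\<bar>\<^sup>2) \<partial>lborel) \<partial>lborel)"

definition in_Bp :: "real \<Rightarrow> (real \<Rightarrow> complex) \<Rightarrow> bool" where
  "in_Bp p u \<longleftrightarrow> u \<in> borel_measurable lborel \<and> Bp_energy p u < \<infinity>"

definition Bp_norm :: "real \<Rightarrow> (real \<Rightarrow> complex) \<Rightarrow> real" where
  "Bp_norm p u = enn2real (Bp_energy p u) powr (1 / p)"

definition avg :: "(real \<Rightarrow> complex) \<Rightarrow> real \<Rightarrow> real \<Rightarrow> complex" where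
  "avg u a b = (\<integral> t\<in>{a<..<b}. u t \<partial>lborel) / of_real (b - a)"

definition bmo_norm :: "(real \<Rightarrow> complex) \<Rightarrow> ennreal" where
  "bmo_norm u = (SUP ab \<in> {(a, b). a < (b::real)}.
      (\<integral>\<^sup>+ t\<in>{fst ab<..<snd ab}. ennreal (cmod (u t - avg u (fst ab) (snd ab))) \<partial>lborel)
        / ennreal (snd ab - fst ab))"

definition in_BMO :: "(real \<Rightarrow> complex) \<Rightarrow> bool" where
  "in_BMO u \<longleftrightarrow> u \<in> borel_measurable lborel \<and>
     (\<forall>a b. set_integrable lborel {a<..<b} u) \<and> bmo_norm u < \<infinity>"

definition JN_constants :: "real \<Rightarrow> real \<Rightarrow> bool" where
  "JN_constants C0 CJN \<longleftrightarrow> C0 > 0 \<and> CJN > 0 \<and>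
     (\<forall>u a b lam. in_BMO u \<and> a < b \<and> lam > 0 \<longrightarrow>
        measure lborel {t \<in> {a<..<b}. cmod (u t - avg u a b) \<ge> lam} / (b - a)
          \<le> C0 * exp (- CJN * lam / enn2real (bmo_norm u)))"

end

theory Submission
  imports Defs "HOL-Real_Asymp.Real_Asymp"
begin

text \<open>
  Truncating the real function u0 at height M gives a bounded function h = clip M u0 whose
  remainder u0 - h has B_p energy below (C_JN/4)^p once M is large (monotone convergence).
  For u in the ball, u - h = (u - u0) + (u0 - h) is then a sum of two functions of B_p norm
  at most C_JN/4, and a function of B_p norm at most beta has BMO norm at most beta, since on
  an interval I the weight |t - s|^(-2) is at least |I|^(-2). So u - h has BMO norm at most
  C_JN/2, the John-Nirenberg inequality bounds the means of exp |(u - h) - (u - h)_I|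
  uniformly, and adding back h costs only a factor exp (2 M).

  For the kernel integral, cover the line by the intervals I_k = I(x, 2^k y). Where I_k is the
  first of them to contain t, the kernel is at most C exp ((1 - 2^k)/2) / y, while the average
  of u moves by at most 2 k ||u||_* from I_0 to I_k; the resulting series of
  2^k exp (2 k ||u||_* - 2^k/2) converges.
\<close>

lemma ennreal_divide_le_iff:
  fixes X :: ennreal
  assumes "0 < c" "0 \<le> B"
  shows "X / ennreal c \<le> ennreal B \<longleftrightarrow> X \<le> ennreal (c * B)"
  using assms by (cases X)
    (auto simp: divide_ennreal ennreal_top_divide pos_divide_le_eq mult.commute top_unique)

lemma Young_linear_bound:
  fixes x b p :: real
  assumes "0 \<le> x" "0 < b" "1 < p"
  shows "x \<le> x powr p * b powr (1 - p) / p + b * (1 - 1 / p)"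
proof -
  define q where "q = p / (p - 1)"
  have "1 < q" "1 / p + 1 / q = 1" using assms(3) by (auto simp: q_def field_simps)
  then have "x / b * 1 \<le> (x / b) powr p / p + 1 powr q / q"
    using assms by (intro Youngs_inequality) auto
  then have "x / b \<le> (x / b) powr p / p + (1 - 1 / p)"
    using \<open>1 / p + 1 / q = 1\<close> by simp
  then have "b * (x / b) \<le> b * ((x / b) powr p / p + (1 - 1 / p))"
    using assms(2) by (intro mult_left_mono) auto
  then show ?thesis
    using assms by (simp add: powr_divide powr_diff field_simps)
qed

lemma powr_add_le:
  fixes x y p :: real
  assumes "0 \<le> x" "0 \<le> y" "0 < p"
  shows "(x + y) powr p \<le> 2 powr p * (x powr p + y powr p)"
proof -
  have "(x + y) powr p \<le> (2 * max x y) powr p"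
    using assms by (intro powr_mono2) auto
  also have "\<dots> = 2 powr p * max x y powr p"
    using assms by (simp add: powr_mult)
  also have "max x y powr p \<le> x powr p + y powr p"
    using assms by (auto simp: max_def)
  finally show ?thesis by (simp add: mult_left_mono)
qed

section \<open>Averages and mean oscillation\<close>

lemma emeasure_lborel_Ioo_finite: "emeasure lborel {a<..<b::real} < \<infinity>"
  by (cases "a \<le> b") auto

lemma set_integrable_Ioo_bounded:
  fixes h :: "real \<Rightarrow> complex"
  assumes "h \<in> borel_measurable lborel" "\<And>t. cmod (h t) \<le> M"
  shows "set_integrable lborel {a<..<b} h"
  unfolding set_integrable_def
  using assms emeasure_lborel_Ioo_finite by (intro integrableI_bounded_set_indicator) auto

lemma set_integrable_Ioo_const [simp]: "set_integrable lborel {a<..<b::real} (\<lambda>_. c :: complex)"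
  by (rule set_integrable_Ioo_bounded[of _ "cmod c"]) auto

lemma avg_const: "a < b \<Longrightarrow> avg (\<lambda>_. c) a b = c"
  by (simp add: avg_def set_integral_const scaleR_conv_of_real)

lemma avg_add:
  assumes "set_integrable lborel {a<..<b} f" "set_integrable lborel {a<..<b} g"
  shows "avg (\<lambda>t. f t + g t) a b = avg f a b + avg g a b"
  using assms by (simp add: avg_def set_integral_add add_divide_distrib)

lemma avg_diff:
  assumes "set_integrable lborel {a<..<b} f" "set_integrable lborel {a<..<b} g"
  shows "avg (\<lambda>t. f t - g t) a b = avg f a b - avg g a b"
  using assms by (simp add: avg_def set_integral_diff diff_divide_distrib)

lemma norm_avg_le:
  assumes "set_integrable lborel {a<..<b} f" "a < b"
  shows "ennreal (cmod (avg f a b))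
    \<le> ennreal (1 / (b - a)) * (\<integral>\<^sup>+ t\<in>{a<..<b}. ennreal (cmod (f t)) \<partial>lborel)"
proof -
  have "ennreal (cmod (LINT t:{a<..<b}|lborel. f t))
      \<le> (\<integral>\<^sup>+ t. ennreal (norm (indicator {a<..<b} t *\<^sub>R f t)) \<partial>lborel)"
    unfolding set_lebesgue_integral_def
    using assms(1) by (intro integral_norm_bound_ennreal) (simp add: set_integrable_def)
  also have "\<dots> = (\<integral>\<^sup>+ t\<in>{a<..<b}. ennreal (cmod (f t)) \<partial>lborel)"
    by (intro nn_integral_cong) (auto split: split_indicator)
  finally have "ennreal (1 / (b - a)) * ennreal (cmod (LINT t:{a<..<b}|lborel. f t))
      \<le> ennreal (1 / (b - a)) * (\<integral>\<^sup>+ t\<in>{a<..<b}. ennreal (cmod (f t)) \<partial>lborel)"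
    by (rule mult_left_mono) simp
  moreover have "ennreal (cmod (avg f a b))
      = ennreal (1 / (b - a)) * ennreal (cmod (LINT t:{a<..<b}|lborel. f t))"
    using assms(2) by (simp add: avg_def norm_divide ennreal_mult[symmetric] flip: of_real_diff)
  ultimately show ?thesis by simp
qed

lemma norm_avg_le_bound:
  assumes "set_integrable lborel {a<..<b} f" "a < b" "\<And>t. cmod (f t) \<le> M"
  shows "cmod (avg f a b) \<le> M"
proof -
  have M: "0 \<le> M"
    using order.trans[OF norm_ge_zero assms(3)] by simp
  have "ennreal (cmod (avg f a b))
      \<le> ennreal (1 / (b - a)) * (\<integral>\<^sup>+ t\<in>{a<..<b}. ennreal (cmod (f t)) \<partial>lborel)"
    by (rule norm_avg_le[OF assms(1,2)])
  also have "\<dots> \<le> ennreal (1 / (b - a)) * (\<integral>\<^sup>+ t. ennreal M * indicator {a<..<b} t \<partial>lborel)"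
    using assms(3)
    by (intro mult_left_mono nn_integral_mono) (auto intro: ennreal_leI split: split_indicator)
  also have "\<dots> = ennreal M"
    using assms(2) M by (simp add: nn_integral_cmult_indicator ennreal_mult[symmetric])
  finally show ?thesis using M by simp
qed

lemma norm_diff_avg_le:
  assumes "set_integrable lborel {a<..<b} f" "a < b"
  shows "ennreal (cmod (f t - avg f a b))
    \<le> ennreal (1 / (b - a)) * (\<integral>\<^sup>+ s\<in>{a<..<b}. ennreal (cmod (f t - f s)) \<partial>lborel)"
proof -
  have "f t - avg f a b = avg (\<lambda>s. f t - f s) a b"
    using assms by (simp add: avg_diff avg_const)
  then show ?thesis
    using assms by (simp add: norm_avg_le set_integral_diff)
qed

lemma norm_diff_avg_add_le:
  assumes "set_integrable lborel {a<..<b} f" "set_integrable lborel {a<..<b} g"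
  shows "cmod (f t + g t - avg (\<lambda>s. f s + g s) a b)
    \<le> cmod (f t - avg f a b) + cmod (g t - avg g a b)"
  using assms norm_triangle_ineq[of "f t - avg f a b" "g t - avg g a b"]
  by (simp add: avg_add algebra_simps)

lemma bmo_norm_le_iff:
  assumes "0 \<le> B"
  shows "bmo_norm u \<le> ennreal B \<longleftrightarrow>
    (\<forall>a b. a < b \<longrightarrow>
      (\<integral>\<^sup>+ t\<in>{a<..<b}. ennreal (cmod (u t - avg u a b)) \<partial>lborel) \<le> ennreal ((b - a) * B))"
  unfolding bmo_norm_def SUP_le_iff using assms by (auto simp: ennreal_divide_le_iff)

lemma mean_osc_add_le:
  assumes [measurable]: "f \<in> borel_measurable lborel" "g \<in> borel_measurable lborel"
    and "set_integrable lborel {a<..<b} f" "set_integrable lborel {a<..<b} g"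
  shows "(\<integral>\<^sup>+ t\<in>{a<..<b}. ennreal (cmod (f t + g t - avg (\<lambda>s. f s + g s) a b)) \<partial>lborel)
    \<le> (\<integral>\<^sup>+ t\<in>{a<..<b}. ennreal (cmod (f t - avg f a b)) \<partial>lborel)
      + (\<integral>\<^sup>+ t\<in>{a<..<b}. ennreal (cmod (g t - avg g a b)) \<partial>lborel)"
proof -
  have "(\<integral>\<^sup>+ t\<in>{a<..<b}. ennreal (cmod (f t + g t - avg (\<lambda>s. f s + g s) a b)) \<partial>lborel)
      \<le> (\<integral>\<^sup>+ t\<in>{a<..<b}.
          ennreal (cmod (f t - avg f a b)) + ennreal (cmod (g t - avg g a b)) \<partial>lborel)"
    using assms(3,4) by (intro nn_integral_mono mult_right_mono)
      (auto simp flip: ennreal_plus intro: ennreal_leI norm_diff_avg_add_le)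
  also have "\<dots> = (\<integral>\<^sup>+ t\<in>{a<..<b}. ennreal (cmod (f t - avg f a b)) \<partial>lborel)
      + (\<integral>\<^sup>+ t\<in>{a<..<b}. ennreal (cmod (g t - avg g a b)) \<partial>lborel)"
    by (simp add: distrib_right nn_integral_add)
  finally show ?thesis .
qed

lemma bmo_norm_add:
  assumes [measurable]: "f \<in> borel_measurable lborel" "g \<in> borel_measurable lborel"
    and "\<And>a b. set_integrable lborel {a<..<b} f" "\<And>a b. set_integrable lborel {a<..<b} g"
  shows "bmo_norm (\<lambda>t. f t + g t) \<le> bmo_norm f + bmo_norm g"
proof (cases "bmo_norm f = \<infinity> \<or> bmo_norm g = \<infinity>")
  case False
  then obtain Bf Bg where B: "bmo_norm f = ennreal Bf" "bmo_norm g = ennreal Bg" "0 \<le> Bf" "0 \<le> Bg"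
    by (cases "bmo_norm f"; cases "bmo_norm g") auto
  have "(\<integral>\<^sup>+ t\<in>{a<..<b}. ennreal (cmod (f t + g t - avg (\<lambda>s. f s + g s) a b)) \<partial>lborel)
      \<le> ennreal ((b - a) * (Bf + Bg))" if "a < b" for a b
  proof -
    have "(\<integral>\<^sup>+ t\<in>{a<..<b}. ennreal (cmod (f t + g t - avg (\<lambda>s. f s + g s) a b)) \<partial>lborel)
      \<le> (\<integral>\<^sup>+ t\<in>{a<..<b}. ennreal (cmod (f t - avg f a b)) \<partial>lborel)
        + (\<integral>\<^sup>+ t\<in>{a<..<b}. ennreal (cmod (g t - avg g a b)) \<partial>lborel)"
      by (rule mean_osc_add_le[OF assms(1,2,3,4)])
    also have "\<dots> \<le> ennreal ((b - a) * Bf) + ennreal ((b - a) * Bg)"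
      using that B bmo_norm_le_iff[of Bf f] bmo_norm_le_iff[of Bg g] by (intro add_mono) auto
    also have "\<dots> = ennreal ((b - a) * (Bf + Bg))"
      using that B(3,4) by (simp add: distrib_left flip: ennreal_plus)
    finally show ?thesis .
  qed
  then have "bmo_norm (\<lambda>t. f t + g t) \<le> ennreal (Bf + Bg)"
    using B by (subst bmo_norm_le_iff) auto
  then show ?thesis using B by (simp add: ennreal_plus)
qed auto

lemma bmo_norm_le_of_bounded:
  assumes "\<And>a b. set_integrable lborel {a<..<b} h" "\<And>t. cmod (h t) \<le> M"
  shows "bmo_norm h \<le> ennreal (2 * M)"
proof -
  have M: "0 \<le> M"
    using order.trans[OF norm_ge_zero assms(2)] by simp
  have "(\<integral>\<^sup>+ t\<in>{a<..<b}. ennreal (cmod (h t - avg h a b)) \<partial>lborel) \<le> ennreal ((b - a) * (2 * M))"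
    if "a < b" for a b
  proof -
    have "cmod (h t - avg h a b) \<le> 2 * M" for t
      using norm_triangle_ineq4[of "h t" "avg h a b"] assms(2)[of t]
        norm_avg_le_bound[OF assms(1) that assms(2)] by simp
    then have "(\<integral>\<^sup>+ t\<in>{a<..<b}. ennreal (cmod (h t - avg h a b)) \<partial>lborel)
        \<le> (\<integral>\<^sup>+ t. ennreal (2 * M) * indicator {a<..<b} t \<partial>lborel)"
      by (intro nn_integral_mono) (auto intro: ennreal_leI split: split_indicator)
    also have "\<dots> = ennreal (2 * M) * ennreal (b - a)"
      using that by (subst nn_integral_cmult_indicator) auto
    also have "\<dots> = ennreal ((b - a) * (2 * M))"
      using that M by (simp add: ennreal_mult[symmetric] mult.commute)
    finally show ?thesis .
  qed
  then show ?thesis using M by (simp add: bmo_norm_le_iff)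
qed

lemma exp_mean_osc_add_bounded_le:
  fixes w h :: "real \<Rightarrow> complex"
  assumes [measurable]: "w \<in> borel_measurable lborel"
    and "set_integrable lborel {a<..<b} w" "set_integrable lborel {a<..<b} h"
    and "\<And>t. cmod (h t) \<le> M" "a < b"
  shows "(\<integral>\<^sup>+ t\<in>{a<..<b}. ennreal (exp (cmod (w t + h t - avg (\<lambda>s. w s + h s) a b))) \<partial>lborel)
    \<le> ennreal (exp (2 * M)) * (\<integral>\<^sup>+ t\<in>{a<..<b}. ennreal (exp (cmod (w t - avg w a b))) \<partial>lborel)"
proof -
  have h_osc: "cmod (h t - avg h a b) \<le> 2 * M" for t
    using norm_triangle_ineq4[of "h t" "avg h a b"] assms(4)[of t]
      norm_avg_le_bound[OF assms(3,5,4)] by simp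
  have "exp (cmod (w t + h t - avg (\<lambda>s. w s + h s) a b))
      \<le> exp (2 * M) * exp (cmod (w t - avg w a b))"
    for t
  proof -
    have "cmod (w t + h t - avg (\<lambda>s. w s + h s) a b) \<le> 2 * M + cmod (w t - avg w a b)"
      using norm_diff_avg_add_le[OF assms(2,3), of t] h_osc[of t] by linarith
    then show ?thesis
      by (simp flip: exp_add)
  qed
  then have "(\<integral>\<^sup>+ t\<in>{a<..<b}. ennreal (exp (cmod (w t + h t - avg (\<lambda>s. w s + h s) a b))) \<partial>lborel)
      \<le> (\<integral>\<^sup>+ t\<in>{a<..<b}. ennreal (exp (2 * M)) * ennreal (exp (cmod (w t - avg w a b))) \<partial>lborel)"
    by (intro nn_integral_mono mult_right_mono) (simp_all add: ennreal_mult[symmetric] ennreal_leI)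
  also have "\<dots> = ennreal (exp (2 * M))
      * (\<integral>\<^sup>+ t\<in>{a<..<b}. ennreal (exp (cmod (w t - avg w a b))) \<partial>lborel)"
    by (simp add: nn_integral_cmult mult.assoc)
  finally show ?thesis .
qed

lemma norm_avg_diff_nested_le:
  assumes "\<And>a b. set_integrable lborel {a<..<b} u" "bmo_norm u \<le> ennreal B" "0 \<le> B"
    and "a < b" "a' \<le> a" "b \<le> b'"
  shows "cmod (avg u a b - avg u a' b') \<le> (b' - a') / (b - a) * B"
proof -
  define c where "c = avg u a' b'"
  have "avg u a b - c = avg (\<lambda>t. u t - c) a b"
    using assms(1,4) by (simp add: avg_diff avg_const)
  then have "ennreal (cmod (avg u a b - c))
      \<le> ennreal (1 / (b - a)) * (\<integral>\<^sup>+ t\<in>{a<..<b}. ennreal (cmod (u t - c)) \<partial>lborel)"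
    using assms(1,4) by (simp add: norm_avg_le set_integral_diff)
  also have "\<dots> \<le> ennreal (1 / (b - a)) * (\<integral>\<^sup>+ t\<in>{a'<..<b'}. ennreal (cmod (u t - c)) \<partial>lborel)"
    using assms(5,6) by (intro mult_left_mono nn_integral_mono) (auto split: split_indicator)
  also have "\<dots> \<le> ennreal (1 / (b - a)) * ennreal ((b' - a') * B)"
    using assms(2-6) unfolding c_def bmo_norm_le_iff[OF assms(3)]
    by (intro mult_left_mono) auto
  also have "\<dots> = ennreal ((b' - a') / (b - a) * B)"
    using assms(3-6) by (simp add: ennreal_mult[symmetric])
  finally show ?thesis
    using assms(3-6) unfolding c_def by (simp add: ennreal_le_iff)
qed

lemma norm_avg_dyadic_diff_le:
  assumes "\<And>a b. set_integrable lborel {a<..<b} u" "bmo_norm u \<le> ennreal B" "0 \<le> B" "0 < y"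
  shows "cmod (avg u (x - 2^k * y) (x + 2^k * y) - avg u (x - y) (x + y)) \<le> 2 * k * B"
proof (induction k)
  case (Suc k)
  have "cmod (avg u (x - 2^k * y) (x + 2^k * y) - avg u (x - 2^Suc k * y) (x + 2^Suc k * y))
      \<le> (4 * 2^k * y) / (2 * 2^k * y) * B"
    using assms by (intro order.trans[OF norm_avg_diff_nested_le[OF assms(1-3)]]) auto
  with Suc.IH assms(4) show ?case
    using norm_triangle_ineq4[of "avg u (x - 2^k * y) (x + 2^k * y) - avg u (x - y) (x + y)"
        "avg u (x - 2^k * y) (x + 2^k * y) - avg u (x - 2^Suc k * y) (x + 2^Suc k * y)"]
    by (simp add: algebra_simps)
qed simp

section \<open>Besov energy controls the BMO norm\<close>

lemma Bp_energy_pair: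
  assumes [measurable]: "f \<in> borel_measurable lborel"
  shows "Bp_energy p f = (\<integral>\<^sup>+ z. ennreal (cmod (f (fst z) - f (snd z)) powr p / \<bar>fst z - snd z\<bar>\<^sup>2)
    \<partial>(lborel \<Otimes>\<^sub>M lborel))"
  unfolding Bp_energy_def by (subst lborel.nn_integral_fst[symmetric]) auto

lemma double_integral_diff_powr_le:
  fixes f :: "real \<Rightarrow> complex"
  assumes [measurable]: "f \<in> borel_measurable lborel"
  shows "(\<integral>\<^sup>+ t\<in>{a<..<b}. (\<integral>\<^sup>+ s\<in>{a<..<b}. ennreal (cmod (f t - f s) powr p) \<partial>lborel) \<partial>lborel)
    \<le> ennreal ((b - a)\<^sup>2) * Bp_energy p f"
proof -
  have pointwise: "ennreal (cmod (f t - f s) powr p) * indicator {a<..<b} s * indicator {a<..<b} t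
      \<le> ennreal ((b - a)\<^sup>2) * ennreal (cmod (f t - f s) powr p / \<bar>t - s\<bar>\<^sup>2)" for t s
  proof (cases "t \<in> {a<..<b} \<and> s \<in> {a<..<b} \<and> t \<noteq> s")
    case True
    then have "\<bar>t - s\<bar> \<le> b - a" "t \<noteq> s" by auto
    then have "\<bar>t - s\<bar>\<^sup>2 \<le> (b - a)\<^sup>2" "0 < \<bar>t - s\<bar>\<^sup>2"
      by (metis abs_ge_zero power_mono, simp)
    then have "cmod (f t - f s) powr p \<le> (b - a)\<^sup>2 * (cmod (f t - f s) powr p / \<bar>t - s\<bar>\<^sup>2)"
      by (simp add: field_simps mult_right_mono)
    then show ?thesis using True by (simp add: ennreal_mult[symmetric])
  qed (auto split: split_indicator)
  have "(\<integral>\<^sup>+ t\<in>{a<..<b}. (\<integral>\<^sup>+ s\<in>{a<..<b}. ennreal (cmod (f t - f s) powr p) \<partial>lborel) \<partial>lborel)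
      = (\<integral>\<^sup>+ t. (\<integral>\<^sup>+ s.
          ennreal (cmod (f t - f s) powr p) * indicator {a<..<b} s * indicator {a<..<b} t
          \<partial>lborel) \<partial>lborel)"
    by (simp add: nn_integral_multc)
  also have "\<dots> \<le> (\<integral>\<^sup>+ t. (\<integral>\<^sup>+ s. ennreal ((b - a)\<^sup>2) * ennreal (cmod (f t - f s) powr p / \<bar>t - s\<bar>\<^sup>2)
      \<partial>lborel) \<partial>lborel)"
    by (intro nn_integral_mono pointwise)
  also have "\<dots> = ennreal ((b - a)\<^sup>2) * Bp_energy p f"
    unfolding Bp_energy_def by (simp add: nn_integral_cmult)
  finally show ?thesis .
qed

lemma double_integral_diff_le:
  fixes f :: "real \<Rightarrow> complex"
  assumes [measurable]: "f \<in> borel_measurable lborel"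
    and "a < b" "1 < p" "0 < \<beta>" "Bp_energy p f \<le> ennreal (\<beta> powr p)"
  shows "(\<integral>\<^sup>+ t\<in>{a<..<b}. (\<integral>\<^sup>+ s\<in>{a<..<b}. ennreal (cmod (f t - f s)) \<partial>lborel) \<partial>lborel)
    \<le> ennreal ((b - a)\<^sup>2 * \<beta>)"
proof -
  \<comment> \<open>Young's inequality, sharp at |f t - f s| = \<beta>, stands in for Jensen's inequality.\<close>
  define c1 where "c1 = \<beta> powr (1 - p) / p"
  define c2 where "c2 = \<beta> * (1 - 1 / p)"
  have c: "0 \<le> c1" "0 \<le> c2" using assms(3,4) by (auto simp: c1_def c2_def)
  have Young:
    "ennreal (cmod (f t - f s)) \<le> ennreal c1 * ennreal (cmod (f t - f s) powr p) + ennreal c2"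
    for t s
    using Young_linear_bound[of "cmod (f t - f s)" \<beta> p] assms(3,4) c
    by (simp add: c1_def c2_def mult.commute ennreal_mult[symmetric] flip: ennreal_plus)
  have local_energy: "(\<integral>\<^sup>+ t\<in>{a<..<b}.
        (\<integral>\<^sup>+ s\<in>{a<..<b}. ennreal (cmod (f t - f s) powr p) \<partial>lborel) \<partial>lborel)
      \<le> ennreal ((b - a)\<^sup>2) * ennreal (\<beta> powr p)"
    by (rule order.trans[OF double_integral_diff_powr_le[OF assms(1)]
        mult_left_mono[OF assms(5)]]) simp
  have "(\<integral>\<^sup>+ t\<in>{a<..<b}. (\<integral>\<^sup>+ s\<in>{a<..<b}. ennreal (cmod (f t - f s)) \<partial>lborel) \<partial>lborel)
      \<le> (\<integral>\<^sup>+ t\<in>{a<..<b}. (\<integral>\<^sup>+ s\<in>{a<..<b}.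
          ennreal c1 * ennreal (cmod (f t - f s) powr p) + ennreal c2 \<partial>lborel) \<partial>lborel)"
    by (intro nn_integral_mono mult_right_mono Young) auto
  also have "\<dots> = ennreal c1 * (\<integral>\<^sup>+ t\<in>{a<..<b}. (\<integral>\<^sup>+ s\<in>{a<..<b}. ennreal (cmod (f t - f s) powr p)
      \<partial>lborel) \<partial>lborel) + ennreal c2 * ennreal (b - a) * ennreal (b - a)"
    using assms(2) by (simp add: distrib_right nn_integral_add nn_integral_cmult mult.assoc
        nn_integral_cmult_indicator)
  also have "\<dots> \<le> ennreal c1 * (ennreal ((b - a)\<^sup>2) * ennreal (\<beta> powr p))
      + ennreal c2 * ennreal (b - a) * ennreal (b - a)"
    by (intro add_mono mult_left_mono local_energy) auto
  also have "\<dots> = ennreal (c1 * ((b - a)\<^sup>2 * \<beta> powr p) + c2 * (b - a) * (b - a))"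
    using c assms(2) by (simp add: ennreal_mult ennreal_plus)
  also have "c1 * ((b - a)\<^sup>2 * \<beta> powr p) + c2 * (b - a) * (b - a)
      = (b - a)\<^sup>2 * (c1 * \<beta> powr p + c2)"
    by (simp add: algebra_simps power2_eq_square)
  also have "c1 * \<beta> powr p + c2 = \<beta>"
    using assms(3,4) by (simp add: c1_def c2_def powr_diff field_simps)
  finally show ?thesis .
qed

lemma set_integrable_Ioo_of_double_integral:
  fixes f :: "real \<Rightarrow> complex"
  assumes [measurable]: "f \<in> borel_measurable lborel"
    and "a < b"
    and "(\<integral>\<^sup>+ t\<in>{a<..<b}. (\<integral>\<^sup>+ s\<in>{a<..<b}. ennreal (cmod (f t - f s)) \<partial>lborel) \<partial>lborel) < \<infinity>"
  shows "set_integrable lborel {a<..<b} f"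
proof -
  have "AE t in lborel. (\<integral>\<^sup>+ s\<in>{a<..<b}. ennreal (cmod (f t - f s)) \<partial>lborel)
      * indicator {a<..<b} t \<noteq> \<infinity>"
    using assms(3) by (intro nn_integral_PInf_AE) auto
  then have "AE t in lborel.
      t \<in> {a<..<b} \<longrightarrow> (\<integral>\<^sup>+ s\<in>{a<..<b}. ennreal (cmod (f t - f s)) \<partial>lborel) \<noteq> \<infinity>"
    by eventually_elim (auto simp: indicator_def)
  moreover have "\<not> (AE t in lborel. t \<notin> {a<..<b})"
    using assms(2) by (subst AE_iff_null_sets[symmetric]) auto
  ultimately obtain t0 where t0: "(\<integral>\<^sup>+ s\<in>{a<..<b}. ennreal (cmod (f t0 - f s)) \<partial>lborel) \<noteq> \<infinity>"
    by (smt (verit, del_insts) AE_mp eventually_mono)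
  have "cmod (f s) \<le> cmod (f t0 - f s) + cmod (f t0)" for s
    using norm_triangle_ineq2[of "f s" "f t0"] by (simp add: norm_minus_commute)
  then have "(\<integral>\<^sup>+ s. ennreal (norm (indicator {a<..<b} s *\<^sub>R f s)) \<partial>lborel)
      \<le> (\<integral>\<^sup>+ s\<in>{a<..<b}. ennreal (cmod (f t0 - f s)) + ennreal (cmod (f t0)) \<partial>lborel)"
    by (intro nn_integral_mono)
      (auto split: split_indicator simp flip: ennreal_plus intro!: ennreal_leI)
  also have "\<dots> = (\<integral>\<^sup>+ s\<in>{a<..<b}. ennreal (cmod (f t0 - f s)) \<partial>lborel)
      + ennreal (cmod (f t0)) * ennreal (b - a)"
    using assms(2) by (simp add: distrib_right nn_integral_add nn_integral_cmult_indicator)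
  also have "\<dots> < \<infinity>"
    using t0 by (simp add: less_top ennreal_mult_less_top)
  finally show ?thesis
    unfolding set_integrable_def by (intro integrableI_bounded) auto
qed

lemma set_integrable_Ioo_of_Bp_energy:
  fixes f :: "real \<Rightarrow> complex"
  assumes [measurable]: "f \<in> borel_measurable lborel" and "1 < p" "Bp_energy p f < \<infinity>"
  shows "set_integrable lborel {a<..<b} f"
proof (cases "a < b")
  case True
  define \<beta> where "\<beta> = (enn2real (Bp_energy p f) + 1) powr (1 / p)"
  have \<beta>: "0 < \<beta>"
    unfolding \<beta>_def by (smt (verit) enn2real_nonneg powr_gt_zero)
  have E: "Bp_energy p f \<le> ennreal (\<beta> powr p)"
    using assms(2,3) by (simp add: \<beta>_def powr_powr less_top[symmetric] ennreal_enn2real_if)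
  have "(\<integral>\<^sup>+ t\<in>{a<..<b}. (\<integral>\<^sup>+ s\<in>{a<..<b}. ennreal (cmod (f t - f s)) \<partial>lborel) \<partial>lborel)
      < \<infinity>"
    using double_integral_diff_le[OF assms(1) True assms(2) \<beta> E] by (simp add: le_less_trans)
  then show ?thesis
    by (rule set_integrable_Ioo_of_double_integral[OF assms(1) True])
qed (simp add: set_integrable_def)

lemma bmo_norm_le_of_Bp_energy:
  fixes f :: "real \<Rightarrow> complex"
  assumes [measurable]: "f \<in> borel_measurable lborel"
    and "1 < p" "0 < \<beta>" "Bp_energy p f \<le> ennreal (\<beta> powr p)"
  shows "bmo_norm f \<le> ennreal \<beta>"
proof -
  have "Bp_energy p f < \<infinity>"
    using assms(4) by (simp add: le_less_trans)
  then have integrable: "set_integrable lborel {a<..<b} f" for a b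
    by (rule set_integrable_Ioo_of_Bp_energy[OF assms(1,2)])
  have "(\<integral>\<^sup>+ t\<in>{a<..<b}. ennreal (cmod (f t - avg f a b)) \<partial>lborel) \<le> ennreal ((b - a) * \<beta>)"
    if "a < b" for a b
  proof -
    have "(\<integral>\<^sup>+ t\<in>{a<..<b}. ennreal (cmod (f t - avg f a b)) \<partial>lborel)
        \<le> (\<integral>\<^sup>+ t\<in>{a<..<b}. ennreal (1 / (b - a))
            * (\<integral>\<^sup>+ s\<in>{a<..<b}. ennreal (cmod (f t - f s)) \<partial>lborel) \<partial>lborel)"
      using integrable that by (intro nn_integral_mono mult_right_mono norm_diff_avg_le) auto
    also have "\<dots> = ennreal (1 / (b - a))
        * (\<integral>\<^sup>+ t\<in>{a<..<b}. (\<integral>\<^sup>+ s\<in>{a<..<b}. ennreal (cmod (f t - f s)) \<partial>lborel) \<partial>lborel)"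
      by (simp add: nn_integral_cmult mult.assoc)
    also have "\<dots> \<le> ennreal (1 / (b - a)) * ennreal ((b - a)\<^sup>2 * \<beta>)"
      using that assms by (intro mult_left_mono double_integral_diff_le) auto
    also have "\<dots> = ennreal ((b - a) * \<beta>)"
      using that assms(3) by (simp add: ennreal_mult[symmetric] power2_eq_square)
    finally show ?thesis .
  qed
  then show ?thesis using assms(3) by (simp add: bmo_norm_le_iff)
qed

lemma Bp_energy_diff_finite:
  fixes f g :: "real \<Rightarrow> complex"
  assumes [measurable]: "f \<in> borel_measurable lborel" "g \<in> borel_measurable lborel"
    and "Bp_energy p f < \<infinity>" "Bp_energy p g < \<infinity>" "0 < p"
  shows "Bp_energy p (\<lambda>t. f t - g t) < \<infinity>"
proof -
  have "ennreal (cmod (f t - g t - (f s - g s)) powr p / \<bar>t - s\<bar>\<^sup>2)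
      \<le> ennreal (2 powr p) * ennreal (cmod (f t - f s) powr p / \<bar>t - s\<bar>\<^sup>2)
        + ennreal (2 powr p) * ennreal (cmod (g t - g s) powr p / \<bar>t - s\<bar>\<^sup>2)" for t s
  proof -
    have "cmod (f t - g t - (f s - g s)) powr p \<le> (cmod (f t - f s) + cmod (g t - g s)) powr p"
      using assms(5) norm_triangle_ineq4[of "f t - f s" "g t - g s"]
      by (intro powr_mono2) (auto simp: algebra_simps)
    also have "\<dots> \<le> 2 powr p * (cmod (f t - f s) powr p + cmod (g t - g s) powr p)"
      using assms(5) by (intro powr_add_le) auto
    finally show ?thesis
      by (simp add: divide_right_mono add_divide_distrib[symmetric] distrib_left[symmetric]
          ennreal_mult[symmetric] flip: ennreal_plus)
  qed
  then have "Bp_energy p (\<lambda>t. f t - g t)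
      \<le> ennreal (2 powr p) * Bp_energy p f + ennreal (2 powr p) * Bp_energy p g"
    by (simp add: Bp_energy_pair nn_integral_mono flip: nn_integral_add nn_integral_cmult)
  also have "\<dots> < \<infinity>"
    using assms(3,4) by (simp add: ennreal_mult_less_top less_top)
  finally show ?thesis .
qed

lemma Bp_energy_le_of_Bp_norm_le:
  assumes "Bp_energy p f < \<infinity>" "0 < p" "Bp_norm p f \<le> \<beta>"
  shows "Bp_energy p f \<le> ennreal (\<beta> powr p)"
proof -
  define e where "e = enn2real (Bp_energy p f)"
  have "e powr (1 / p) \<le> \<beta>"
    using assms(3) by (simp add: Bp_norm_def e_def)
  then have "(e powr (1 / p)) powr p \<le> \<beta> powr p"
    using assms(2) by (intro powr_mono2) (auto simp: e_def)
  then have "e \<le> \<beta> powr p"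
    using assms(2) by (simp add: e_def powr_powr)
  moreover have "ennreal e = Bp_energy p f"
    using assms(1) unfolding e_def by (intro ennreal_enn2real) simp
  ultimately show ?thesis
    using ennreal_leI by metis
qed

lemma in_BMO_add_of_Bp_energy:
  fixes v g :: "real \<Rightarrow> complex"
  assumes [measurable]: "v \<in> borel_measurable lborel" "g \<in> borel_measurable lborel"
    and "1 < p" "0 < \<beta>" "Bp_energy p v \<le> ennreal (\<beta> powr p)" "Bp_energy p g \<le> ennreal (\<beta> powr p)"
  shows "in_BMO (\<lambda>t. v t + g t)" "bmo_norm (\<lambda>t. v t + g t) \<le> ennreal (2 * \<beta>)"
proof -
  have integrable: "set_integrable lborel {a<..<b} v" "set_integrable lborel {a<..<b} g" for a b
    using assms(3,5,6) by (auto intro!: set_integrable_Ioo_of_Bp_energy simp: le_less_trans)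
  have "bmo_norm (\<lambda>t. v t + g t) \<le> bmo_norm v + bmo_norm g"
    using integrable by (intro bmo_norm_add) auto
  also have "\<dots> \<le> ennreal \<beta> + ennreal \<beta>"
    using assms(3-6) by (intro add_mono bmo_norm_le_of_Bp_energy) auto
  finally show "bmo_norm (\<lambda>t. v t + g t) \<le> ennreal (2 * \<beta>)"
    using assms(4) by (simp flip: ennreal_plus)
  then show "in_BMO (\<lambda>t. v t + g t)"
    unfolding in_BMO_def using integrable ennreal_less_top
    by (auto intro: set_integral_add order.strict_trans1)
qed

section \<open>Truncation\<close>

definition clip :: "real \<Rightarrow> real \<Rightarrow> real" where
  "clip M x = max (- M) (min M x)"

lemma abs_clip_le: "0 \<le> M \<Longrightarrow> \<bar>clip M x\<bar> \<le> M"
  by (simp add: clip_def abs_le_iff)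

lemma clip_eq_self: "\<bar>x\<bar> \<le> M \<Longrightarrow> clip M x = x"
  by (simp add: clip_def max_def min_def abs_le_iff)

lemma abs_diff_clip_antimono:
  assumes "0 \<le> M" "M \<le> M'"
  shows "\<bar>(x - clip M' x) - (y - clip M' y)\<bar> \<le> \<bar>(x - clip M x) - (y - clip M y)\<bar>"
  using assms by (auto simp: clip_def max_def min_def abs_if)

lemma Bp_energy_clip_remainder_small:
  fixes u :: "real \<Rightarrow> complex"
  assumes [measurable]: "u \<in> borel_measurable lborel"
    and "Bp_energy p u < \<infinity>" "\<And>t. Im (u t) = 0" "0 < p" "0 < \<epsilon>"
  obtains M :: nat where "Bp_energy p (\<lambda>t. u t - of_real (clip M (Re (u t)))) < \<epsilon>"
proof -
  define F where "F M z = ennreal (\<bar>(Re (u (fst z)) - clip M (Re (u (fst z))))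
    - (Re (u (snd z)) - clip M (Re (u (snd z))))\<bar> powr p / \<bar>fst z - snd z\<bar>\<^sup>2)" for M :: nat and z
  have [measurable]: "F M \<in> borel_measurable (lborel \<Otimes>\<^sub>M lborel)" for M
    unfolding F_def clip_def by measurable
  have energy: "Bp_energy p (\<lambda>t. u t - of_real (clip M (Re (u t))))
      = integral\<^sup>N (lborel \<Otimes>\<^sub>M lborel) (F M)"
    for M
  proof -
    have "u t - of_real (clip M (Re (u t))) = of_real (Re (u t) - clip M (Re (u t)))" for t
      using assms(3)[of t] by (simp add: complex_eq_iff)
    then show ?thesis
      unfolding F_def clip_def by (subst Bp_energy_pair) (auto simp flip: of_real_diff)
  qed
  have "F 0 = (\<lambda>z. ennreal (cmod (u (fst z) - u (snd z)) powr p / \<bar>fst z - snd z\<bar>\<^sup>2))"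
    using assms(3) by (simp add: F_def clip_def fun_eq_iff cmod_def)
  then have "integral\<^sup>N (lborel \<Otimes>\<^sub>M lborel) (F 0) < \<infinity>"
    using assms(2) by (simp add: Bp_energy_pair)
  moreover have "F (Suc M) z \<le> F M z" for M z
    unfolding F_def using assms(4)
    by (intro ennreal_leI divide_right_mono powr_mono2 abs_diff_clip_antimono) auto
  ultimately have "(\<integral>\<^sup>+ z. (INF M. F M z) \<partial>(lborel \<Otimes>\<^sub>M lborel))
      = (INF M. integral\<^sup>N (lborel \<Otimes>\<^sub>M lborel) (F M))"
    by (intro nn_integral_monotone_convergence_INF_AE') auto
  moreover have "(INF M. F M z) = 0" for z
  proof -
    obtain M :: nat where "max \<bar>Re (u (fst z))\<bar> \<bar>Re (u (snd z))\<bar> \<le> M"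
      using real_arch_simple by blast
    then have "F M z = 0"
      using assms(4) by (simp add: F_def clip_eq_self)
    then show ?thesis
      by (metis INF_lower UNIV_I le_zero_eq)
  qed
  ultimately have "(INF M. integral\<^sup>N (lborel \<Otimes>\<^sub>M lborel) (F M)) < \<epsilon>"
    using assms(5) by simp
  then show ?thesis
    using that by (auto simp: INF_less_iff energy)
qed

lemma Bp_ball_minus_clip_in_BMO:
  fixes u0 :: "real \<Rightarrow> complex"
  assumes "1 < p" "0 < \<beta>" "in_Bp p u0" "\<And>t. Im (u0 t) = 0"
  obtains h M where "h \<in> borel_measurable lborel" "\<And>t. cmod (h t) \<le> M"
    "\<And>u. in_Bp p u \<Longrightarrow> Bp_norm p (u - u0) \<le> \<beta> \<Longrightarrow>
       in_BMO (\<lambda>t. u t - h t) \<and> bmo_norm (\<lambda>t. u t - h t) \<le> ennreal (2 * \<beta>)"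
proof -
  have [measurable]: "u0 \<in> borel_measurable lborel" and "Bp_energy p u0 < \<infinity>"
    using assms(3) by (auto simp: in_Bp_def)
  obtain M :: nat where small: "Bp_energy p (\<lambda>t. u0 t - of_real (clip M (Re (u0 t)))) < \<beta> powr p"
    by (rule Bp_energy_clip_remainder_small[of u0 p "ennreal (\<beta> powr p)"])
      (use assms(1,2,4) \<open>Bp_energy p u0 < \<infinity>\<close> in auto)
  define h where "h t = complex_of_real (clip M (Re (u0 t)))" for t
  have h_measurable [measurable]: "h \<in> borel_measurable lborel"
    unfolding h_def clip_def by measurable
  have "cmod (h t) \<le> M" for t
    using abs_clip_le[of "real M" "Re (u0 t)"] by (simp add: h_def)
  moreover have "in_BMO (\<lambda>t. u t - h t) \<and> bmo_norm (\<lambda>t. u t - h t) \<le> ennreal (2 * \<beta>)"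
    if "in_Bp p u" "Bp_norm p (u - u0) \<le> \<beta>" for u
  proof -
    have [measurable]: "u \<in> borel_measurable lborel"
      using that(1) by (simp add: in_Bp_def)
    have "Bp_energy p (\<lambda>t. u t - u0 t) < \<infinity>"
      using that(1) assms(1) \<open>Bp_energy p u0 < \<infinity>\<close>
      by (intro Bp_energy_diff_finite) (auto simp: in_Bp_def)
    then have "Bp_energy p (\<lambda>t. u t - u0 t) \<le> ennreal (\<beta> powr p)"
      using that(2) assms(1) by (intro Bp_energy_le_of_Bp_norm_le) (auto simp: fun_diff_def)
    moreover have "Bp_energy p (\<lambda>t. u0 t - h t) \<le> ennreal (\<beta> powr p)"
      using small by (simp add: h_def[abs_def])
    ultimately have "in_BMO (\<lambda>t. (u t - u0 t) + (u0 t - h t))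
        \<and> bmo_norm (\<lambda>t. (u t - u0 t) + (u0 t - h t)) \<le> ennreal (2 * \<beta>)"
      using assms(1,2) by (intro conjI in_BMO_add_of_Bp_energy) auto
    then show ?thesis
      by simp
  qed
  ultimately show ?thesis
    using that h_measurable by blast
qed

section \<open>Exponential integrability\<close>

lemma John_Nirenberg_tail_le:
  fixes f :: "real \<Rightarrow> complex"
  assumes "JN_constants C0 CJN" "in_BMO f" "bmo_norm f \<le> ennreal m" "0 < m" "a < b" "0 < r"
  shows "emeasure lborel {t \<in> {a<..<b}. r \<le> cmod (f t - avg f a b)}
    \<le> ennreal (C0 * (b - a) * exp (- CJN * r / m))"
proof (cases "bmo_norm f = 0")
  case True
  \<comment> \<open>JN_constants divides by enn2real (bmo_norm f) = 0 here and only gives the bound C0.\<close>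
  have [measurable]: "f \<in> borel_measurable lborel"
    using assms(2) by (simp add: in_BMO_def)
  have "(\<integral>\<^sup>+ t\<in>{a<..<b}. ennreal (cmod (f t - avg f a b)) \<partial>lborel) = 0"
    using True bmo_norm_le_iff[of 0 f] assms(5) by simp
  then have null: "AE t in lborel. \<not> (t \<in> {a<..<b} \<and> r \<le> cmod (f t - avg f a b))"
    using assms(6) by (subst (asm) nn_integral_0_iff_AE)
      (auto elim!: eventually_mono split: split_indicator)
  show ?thesis
    using emeasure_eq_0_AE[OF null] by simp
next
  case False
  define n where "n = enn2real (bmo_norm f)"
  have "bmo_norm f = ennreal n" "0 \<le> n"
    using assms(2) by (simp_all add: in_BMO_def n_def)
  then have n: "0 < n" "n \<le> m"
    using False assms(3,4) by auto
  have CJN: "0 < CJN" "0 < C0"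
    using assms(1) by (auto simp: JN_constants_def)
  have "emeasure lborel {t \<in> {a<..<b}. r \<le> cmod (f t - avg f a b)} \<le> emeasure lborel {a<..<b}"
    by (intro emeasure_mono) auto
  then have finite: "emeasure lborel {t \<in> {a<..<b}. r \<le> cmod (f t - avg f a b)} < \<infinity>"
    using emeasure_lborel_Ioo_finite by (rule le_less_trans)
  have "measure lborel {t \<in> {a<..<b}. r \<le> cmod (f t - avg f a b)} / (b - a)
      \<le> C0 * exp (- CJN * r / n)"
    using assms(1,2,5,6) by (auto simp: JN_constants_def n_def)
  also have "\<dots> \<le> C0 * exp (- CJN * r / m)"
    using n CJN assms(6) by (auto simp: frac_le)
  finally have "measure lborel {t \<in> {a<..<b}. r \<le> cmod (f t - avg f a b)}
      \<le> C0 * (b - a) * exp (- CJN * r / m)"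
    using assms(5) by (simp add: field_simps)
  with finite show ?thesis
    by (simp add: emeasure_eq_ennreal_measure ennreal_leI)
qed

lemma exp_le_layer_sum:
  fixes X :: "'a \<Rightarrow> real"
  assumes "0 \<le> \<alpha>"
  shows "ennreal (exp (\<alpha> * X t)) * indicator A t
    \<le> ennreal (exp \<alpha>) * indicator A t
      + (\<Sum>k. ennreal (exp (\<alpha> * (real k + 2))) * indicator {s \<in> A. real k + 1 \<le> X s} t)"
proof (cases "t \<in> A \<and> 1 \<le> X t")
  case True
  define k where "k = nat \<lfloor>X t\<rfloor> - 1"
  have "real k + 1 \<le> X t" "X t \<le> real k + 2"
    using True unfolding k_def by (auto simp: of_nat_diff) linarith+
  then have "ennreal (exp (\<alpha> * X t))
      \<le> ennreal (exp (\<alpha> * (real k + 2))) * indicator {s \<in> A. real k + 1 \<le> X s} t"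
    using True assms by (auto intro!: ennreal_leI mult_left_mono)
  also have "\<dots> \<le> (\<Sum>k. ennreal (exp (\<alpha> * (real k + 2))) * indicator {s \<in> A. real k + 1 \<le> X s} t)"
    using sum_le_suminf[OF summableI, of "{k}"] by simp
  finally show ?thesis
    using True by (simp add: add_increasing)
next
  case False
  then show ?thesis
    using assms by (auto simp: ennreal_leI add_increasing2 mult_left_le split: split_indicator)
qed

lemma John_Nirenberg_layer_le:
  fixes f :: "real \<Rightarrow> complex"
  assumes "JN_constants C0 CJN" "in_BMO f" "0 < \<alpha>" "bmo_norm f \<le> ennreal (CJN / (2 * \<alpha>))" "a < b"
  shows "ennreal (exp (\<alpha> * (real k + 2)))
      * emeasure lborel {t \<in> {a<..<b}. real k + 1 \<le> cmod (f t - avg f a b)}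
    \<le> ennreal (C0 * (b - a) * exp (- \<alpha>) ^ k)"
proof -
  have C: "0 < C0" "0 < CJN"
    using assms(1) by (auto simp: JN_constants_def)
  have "emeasure lborel {t \<in> {a<..<b}. real k + 1 \<le> cmod (f t - avg f a b)}
      \<le> ennreal (C0 * (b - a) * exp (- CJN * (real k + 1) / (CJN / (2 * \<alpha>))))"
    using assms C by (intro John_Nirenberg_tail_le) auto
  also have "- CJN * (real k + 1) / (CJN / (2 * \<alpha>)) = - 2 * \<alpha> * (real k + 1)"
    using C by (simp add: field_simps)
  finally have "ennreal (exp (\<alpha> * (real k + 2)))
        * emeasure lborel {t \<in> {a<..<b}. real k + 1 \<le> cmod (f t - avg f a b)}
      \<le> ennreal (exp (\<alpha> * (real k + 2)) * (C0 * (b - a) * exp (- 2 * \<alpha> * (real k + 1))))"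
    using C assms(5) by (simp add: ennreal_mult mult_left_mono)
  also have "exp (\<alpha> * (real k + 2)) * (C0 * (b - a) * exp (- 2 * \<alpha> * (real k + 1)))
      = C0 * (b - a) * exp (- \<alpha>) ^ k"
    by (simp add: algebra_simps flip: exp_add exp_of_nat_mult)
  finally show ?thesis .
qed

lemma exp_mean_osc_le:
  fixes f :: "real \<Rightarrow> complex"
  assumes "JN_constants C0 CJN" "in_BMO f" "0 < \<alpha>" "bmo_norm f \<le> ennreal (CJN / (2 * \<alpha>))" "a < b"
  shows "(\<integral>\<^sup>+ t\<in>{a<..<b}. ennreal (exp (\<alpha> * cmod (f t - avg f a b))) \<partial>lborel)
    \<le> ennreal ((b - a) * (exp \<alpha> + C0 / (1 - exp (- \<alpha>))))"
proof -
  have [measurable]: "f \<in> borel_measurable lborel"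
    using assms(2) by (simp add: in_BMO_def)
  have C0: "0 < C0"
    using assms(1) by (simp add: JN_constants_def)
  define S where "S k = {t \<in> {a<..<b}. real k + 1 \<le> cmod (f t - avg f a b)}" for k :: nat
  have [measurable]: "S k \<in> sets lborel" for k
    unfolding S_def by measurable
  have "(\<integral>\<^sup>+ t\<in>{a<..<b}. ennreal (exp (\<alpha> * cmod (f t - avg f a b))) \<partial>lborel)
      \<le> (\<integral>\<^sup>+ t. ennreal (exp \<alpha>) * indicator {a<..<b} t
          + (\<Sum>k. ennreal (exp (\<alpha> * (real k + 2))) * indicator (S k) t) \<partial>lborel)"
    unfolding S_def using assms(3)
    by (intro nn_integral_mono exp_le_layer_sum[where X = "\<lambda>t. cmod (f t - avg f a b)"]) simp
  also have "\<dots> = ennreal (exp \<alpha>) * ennreal (b - a)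
      + (\<Sum>k. ennreal (exp (\<alpha> * (real k + 2))) * emeasure lborel (S k))"
  proof -
    have "(\<integral>\<^sup>+ t. ennreal (exp (\<alpha> * (real k + 2))) * indicator (S k) t \<partial>lborel)
        = ennreal (exp (\<alpha> * (real k + 2))) * emeasure lborel (S k)" for k
      by (rule nn_integral_cmult_indicator) measurable
    then show ?thesis
      using assms(5) by (simp add: nn_integral_add nn_integral_suminf nn_integral_cmult_indicator)
  qed
  also have "\<dots> \<le> ennreal (exp \<alpha>) * ennreal (b - a) + (\<Sum>k. ennreal (C0 * (b - a) * exp (- \<alpha>) ^ k))"
    unfolding S_def using assms by (intro add_left_mono suminf_le John_Nirenberg_layer_le) auto
  also have "(\<Sum>k. ennreal (C0 * (b - a) * exp (- \<alpha>) ^ k))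
      = ennreal (C0 * (b - a) / (1 - exp (- \<alpha>)))"
    using C0 assms(3,5)
    by (simp add: suminf_ennreal2 summable_geometric suminf_geometric suminf_mult summable_mult)
  also have "ennreal (exp \<alpha>) * ennreal (b - a) + ennreal (C0 * (b - a) / (1 - exp (- \<alpha>)))
      = ennreal ((b - a) * (exp \<alpha> + C0 / (1 - exp (- \<alpha>))))"
    using C0 assms(3,5) by (simp add: ennreal_mult[symmetric] algebra_simps flip: ennreal_plus)
  finally show ?thesis .
qed

lemma BMO_add_bounded_osc_bounds:
  fixes w h :: "real \<Rightarrow> complex"
  assumes "JN_constants C0 CJN" "in_BMO w" "bmo_norm w \<le> ennreal (CJN / 2)"
    and [measurable]: "h \<in> borel_measurable lborel" and "\<And>t. cmod (h t) \<le> M"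
  shows "set_integrable lborel {a<..<b} (\<lambda>t. w t + h t)"
    and "bmo_norm (\<lambda>t. w t + h t) \<le> ennreal (CJN / 2 + 2 * M)"
    and "a < b \<Longrightarrow>
      (\<integral>\<^sup>+ t\<in>{a<..<b}. ennreal (exp (cmod (w t + h t - avg (\<lambda>s. w s + h s) a b))) \<partial>lborel)
        \<le> ennreal ((b - a) * (exp (2 * M) * (exp 1 + C0 / (1 - exp (- 1)))))"
proof -
  have [measurable]: "w \<in> borel_measurable lborel"
    and w_integrable: "\<And>a b. set_integrable lborel {a<..<b} w"
    using assms(2) by (auto simp: in_BMO_def)
  have h_integrable: "set_integrable lborel {a<..<b} h" for a b
    using set_integrable_Ioo_bounded assms(4,5) .
  have "0 \<le> M" "0 < C0" "0 < CJN"
    using order.trans[OF norm_ge_zero assms(5)] assms(1) by (auto simp: JN_constants_def)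
  show "set_integrable lborel {a<..<b} (\<lambda>t. w t + h t)"
    using w_integrable h_integrable by (rule set_integral_add)
  have "bmo_norm (\<lambda>t. w t + h t) \<le> bmo_norm w + bmo_norm h"
    using w_integrable h_integrable by (intro bmo_norm_add) auto
  also have "\<dots> \<le> ennreal (CJN / 2) + ennreal (2 * M)"
    using assms(3,5) h_integrable by (intro add_mono bmo_norm_le_of_bounded) auto
  finally show "bmo_norm (\<lambda>t. w t + h t) \<le> ennreal (CJN / 2 + 2 * M)"
    using \<open>0 \<le> M\<close> \<open>0 < CJN\<close> by (simp flip: ennreal_plus)
  assume "a < b"
  have "(\<integral>\<^sup>+ t\<in>{a<..<b}. ennreal (exp (cmod (w t + h t - avg (\<lambda>s. w s + h s) a b))) \<partial>lborel)
      \<le> ennreal (exp (2 * M)) * (\<integral>\<^sup>+ t\<in>{a<..<b}. ennreal (exp (cmod (w t - avg w a b))) \<partial>lborel)"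
    using w_integrable h_integrable assms(5) \<open>a < b\<close> by (intro exp_mean_osc_add_bounded_le) auto
  also have "\<dots> \<le> ennreal (exp (2 * M)) * ennreal ((b - a) * (exp 1 + C0 / (1 - exp (- 1))))"
    using exp_mean_osc_le[OF assms(1,2), of 1] assms(3) \<open>a < b\<close> by (intro mult_left_mono) auto
  also have "\<dots> = ennreal ((b - a) * (exp (2 * M) * (exp 1 + C0 / (1 - exp (- 1)))))"
    using \<open>0 < C0\<close> \<open>a < b\<close> by (simp add: ennreal_mult[symmetric] mult_ac)
  finally show "(\<integral>\<^sup>+ t\<in>{a<..<b}. ennreal (exp (cmod (w t + h t - avg (\<lambda>s. w s + h s) a b))) \<partial>lborel)
      \<le> ennreal ((b - a) * (exp (2 * M) * (exp 1 + C0 / (1 - exp (- 1)))))" .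
qed

lemma Bp_ball_uniform_osc_bounds:
  fixes u0 :: "real \<Rightarrow> complex"
  assumes "1 < p" "JN_constants C0 CJN" "in_Bp p u0" "\<And>t. Im (u0 t) = 0"
  obtains B K where "0 \<le> B" "0 < K"
    "\<And>u. in_Bp p u \<Longrightarrow> Bp_norm p (u - u0) \<le> CJN / 4 \<Longrightarrow>
       (\<forall>a b. set_integrable lborel {a<..<b} u) \<and> bmo_norm u \<le> ennreal B \<and>
       (\<forall>a b. a < b \<longrightarrow>
          (\<integral>\<^sup>+ t\<in>{a<..<b}. ennreal (exp (cmod (u t - avg u a b))) \<partial>lborel) \<le> ennreal ((b - a) * K))"
proof -
  have C: "0 < C0" "0 < CJN"
    using assms(2) by (auto simp: JN_constants_def)
  obtain h M where h: "h \<in> borel_measurable lborel" "\<And>t. cmod (h t) \<le> M"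
    and shift: "\<And>u. in_Bp p u \<Longrightarrow> Bp_norm p (u - u0) \<le> CJN / 4 \<Longrightarrow>
      in_BMO (\<lambda>t. u t - h t) \<and> bmo_norm (\<lambda>t. u t - h t) \<le> ennreal (2 * (CJN / 4))"
    using Bp_ball_minus_clip_in_BMO[OF assms(1) _ assms(3,4), of "CJN / 4"] C by auto
  have "0 \<le> M"
    using order.trans[OF norm_ge_zero h(2)] by simp
  define K where "K = exp (2 * M) * (exp 1 + C0 / (1 - exp (- 1)))"
  have "0 < K"
    using C by (simp add: K_def add_pos_pos)
  have "(\<forall>a b. set_integrable lborel {a<..<b} u) \<and> bmo_norm u \<le> ennreal (CJN / 2 + 2 * M) \<and>
       (\<forall>a b. a < b \<longrightarrow>
          (\<integral>\<^sup>+ t\<in>{a<..<b}. ennreal (exp (cmod (u t - avg u a b))) \<partial>lborel) \<le> ennreal ((b - a) * K))"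
    if "in_Bp p u" "Bp_norm p (u - u0) \<le> CJN / 4" for u
  proof -
    define w where "w t = u t - h t" for t
    have u_eq: "u = (\<lambda>t. w t + h t)"
      by (simp add: w_def)
    have w: "in_BMO w" "bmo_norm w \<le> ennreal (CJN / 2)"
      using shift[OF that] by (simp_all add: w_def[abs_def])
    show ?thesis
      unfolding u_eq K_def using BMO_add_bounded_osc_bounds[OF assms(2) w h] by blast
  qed
  then show ?thesis
    using that[of "CJN / 2 + 2 * M" K] C \<open>0 \<le> M\<close> \<open>0 < K\<close> by auto
qed

section \<open>The kernel integral\<close>

lemma summable_dyadic_exp: "summable (\<lambda>k. 2^k * exp (2 * real k * B - 2^k / 2))"
proof (rule summable_comparison_test_bigo)
  show "summable (\<lambda>k. norm ((1 / 2 :: real) ^ k))"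
    by (simp add: summable_geometric)
  show "(\<lambda>k. 2^k * exp (2 * real k * B - 2^k / 2)) \<in> O(\<lambda>k. (1 / 2) ^ k)"
    by real_asymp
qed

lemma exists_dyadic_scale:
  fixes r :: real
  assumes "0 \<le> r"
  obtains k :: nat where "r < 2^k" "(2^k - 1) / 2 \<le> r"
proof -
  obtain n :: nat where "r < 2^n"
    using real_arch_pow[of 2 r] by auto
  then obtain k :: nat where k: "r < 2^k" "\<And>j. j < k \<Longrightarrow> \<not> r < 2^j"
    using exists_least_iff[of "\<lambda>n. r < 2^n"] by blast
  have "(2^k - 1) / 2 \<le> r"
  proof (cases k)
    case (Suc j)
    then show ?thesis
      using k(2)[of j] by simp
  qed (use assms in simp)
  with k(1) show ?thesis
    by (rule that)
qed

lemma kernel_exp_osc_le_dyadic: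
  fixes u \<phi> :: "real \<Rightarrow> complex"
  assumes "\<And>a b. set_integrable lborel {a<..<b} u" "bmo_norm u \<le> ennreal B" "0 \<le> B"
    and "\<And>x. cmod (\<phi> x) \<le> C * exp (- \<bar>x\<bar>)" "0 < y"
  obtains k :: nat where "t \<in> {x - 2^k * y <..< x + 2^k * y}"
    "cmod (\<phi> ((x - t) / y)) / y * exp (cmod (u t - avg u (x - y) (x + y)))
      \<le> C / y * exp ((1 - 2^k) / 2 + 2 * real k * B)
        * exp (cmod (u t - avg u (x - 2^k * y) (x + 2^k * y)))"
proof -
  have "0 \<le> C"
    using order.trans[OF norm_ge_zero assms(4)[of 0]] by simp
  obtain k :: nat where k: "\<bar>x - t\<bar> / y < 2^k" "(2^k - 1) / 2 \<le> \<bar>x - t\<bar> / y"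
    using exists_dyadic_scale[of "\<bar>x - t\<bar> / y"] assms(5) by auto
  have "exp (- \<bar>(x - t) / y\<bar>) \<le> exp ((1 - 2^k) / 2)"
    using assms(5) k(2) by (simp add: abs_divide field_simps)
  then have decay: "cmod (\<phi> ((x - t) / y)) \<le> C * exp ((1 - 2^k) / 2)"
    using assms(4)[of "(x - t) / y"] \<open>0 \<le> C\<close> by (meson mult_left_mono order.trans)
  have recentre: "exp (cmod (u t - avg u (x - y) (x + y)))
      \<le> exp (2 * real k * B) * exp (cmod (u t - avg u (x - 2^k * y) (x + 2^k * y)))"
    using norm_triangle_ineq[of "u t - avg u (x - 2^k * y) (x + 2^k * y)"
        "avg u (x - 2^k * y) (x + 2^k * y) - avg u (x - y) (x + y)"]
      norm_avg_dyadic_diff_le[OF assms(1-3,5), of x k]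
    by (simp flip: exp_add)
  have "cmod (\<phi> ((x - t) / y)) / y * exp (cmod (u t - avg u (x - y) (x + y)))
      \<le> C * exp ((1 - 2^k) / 2) / y
        * (exp (2 * real k * B) * exp (cmod (u t - avg u (x - 2^k * y) (x + 2^k * y))))"
    by (rule mult_mono[OF divide_right_mono[OF decay] recentre]) (use \<open>0 \<le> C\<close> assms(5) in auto)
  moreover have "t \<in> {x - 2^k * y <..< x + 2^k * y}"
    using k(1) assms(5) by (auto simp: divide_less_eq abs_less_iff)
  ultimately show ?thesis
    by (intro that) (simp_all add: exp_add mult_ac)
qed

lemma kernel_integral_exp_osc_le:
  fixes u \<phi> :: "real \<Rightarrow> complex"
  assumes [measurable]: "u \<in> borel_measurable lborel" "\<phi> \<in> borel_measurable lborel"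
    and integrable: "\<And>a b. set_integrable lborel {a<..<b} u"
    and bmo: "bmo_norm u \<le> ennreal B" "0 \<le> B"
    and exp_osc: "\<And>a b. a < b \<Longrightarrow>
      (\<integral>\<^sup>+ t\<in>{a<..<b}. ennreal (exp (cmod (u t - avg u a b))) \<partial>lborel) \<le> ennreal ((b - a) * K)"
    and "0 \<le> K"
    and decay: "\<And>x. cmod (\<phi> x) \<le> C * exp (- \<bar>x\<bar>)"
    and "0 < y"
  shows "(\<integral>\<^sup>+ t. ennreal (cmod (\<phi> ((x - t) / y)) / y
      * exp (cmod (u t - avg u (x - y) (x + y)))) \<partial>lborel)
    \<le> ennreal (2 * exp (1 / 2) * C * K * (\<Sum>k. 2^k * exp (2 * real k * B - 2^k / 2)))"
proof -
  have "0 \<le> C"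
    using order.trans[OF norm_ge_zero decay[of 0]] by simp
  \<comment> \<open>Kernel bound at the first dyadic scale k covering t, times the drift of the averages.\<close>
  define c where "c k = C / y * exp ((1 - 2^k) / 2 + 2 * real k * B)" for k :: nat
  define G where "G k t = ennreal (c k)
    * (ennreal (exp (cmod (u t - avg u (x - 2^k * y) (x + 2^k * y))))
    * indicator {x - 2^k * y <..< x + 2^k * y} t)" for k t
  have "0 \<le> c k" for k
    using \<open>0 \<le> C\<close> \<open>0 < y\<close> by (simp add: c_def)
  have dyadic_cover:
      "ennreal (cmod (\<phi> ((x - t) / y)) / y * exp (cmod (u t - avg u (x - y) (x + y))))
      \<le> (\<Sum>k. G k t)" for t
  proof -
    obtain k where "t \<in> {x - 2^k * y <..< x + 2^k * y}"
      "cmod (\<phi> ((x - t) / y)) / y * exp (cmod (u t - avg u (x - y) (x + y)))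
        \<le> c k * exp (cmod (u t - avg u (x - 2^k * y) (x + 2^k * y)))"
      unfolding c_def by (rule kernel_exp_osc_le_dyadic[OF integrable bmo decay \<open>0 < y\<close>])
    then have "ennreal (cmod (\<phi> ((x - t) / y)) / y * exp (cmod (u t - avg u (x - y) (x + y))))
        \<le> G k t"
      using \<open>0 \<le> c k\<close> by (simp add: G_def ennreal_mult[symmetric] ennreal_leI)
    also have "\<dots> \<le> (\<Sum>k. G k t)"
      using sum_le_suminf[OF summableI, of "{k}"] by simp
    finally show ?thesis .
  qed
  have annulus: "(\<integral>\<^sup>+ t. G k t \<partial>lborel)
      \<le> ennreal (2 * exp (1 / 2) * C * K * (2^k * exp (2 * real k * B - 2^k / 2)))"
    for k
  proof -
    have "(\<integral>\<^sup>+ t. G k t \<partial>lborel) = ennreal (c k) * (\<integral>\<^sup>+ t\<in>{x - 2^k * y <..< x + 2^k * y}.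
        ennreal (exp (cmod (u t - avg u (x - 2^k * y) (x + 2^k * y)))) \<partial>lborel)"
      by (simp add: G_def nn_integral_cmult)
    also have "\<dots> \<le> ennreal (c k) * ennreal (((x + 2^k * y) - (x - 2^k * y)) * K)"
      using \<open>0 < y\<close> by (intro mult_left_mono exp_osc) auto
    also have "\<dots> = ennreal (2 * exp (1 / 2) * C * K * (2^k * exp (2 * real k * B - 2^k / 2)))"
      using \<open>0 \<le> C\<close> \<open>0 < y\<close> \<open>0 \<le> K\<close>
      by (simp add: c_def ennreal_mult[symmetric] field_simps flip: exp_add)
    finally show ?thesis .
  qed
  have "(\<integral>\<^sup>+ t. ennreal (cmod (\<phi> ((x - t) / y)) / y
      * exp (cmod (u t - avg u (x - y) (x + y)))) \<partial>lborel)
      \<le> (\<integral>\<^sup>+ t. (\<Sum>k. G k t) \<partial>lborel)"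
    by (intro nn_integral_mono dyadic_cover)
  also have "\<dots> = (\<Sum>k. \<integral>\<^sup>+ t. G k t \<partial>lborel)"
    by (intro nn_integral_suminf) (simp add: G_def)
  also have "\<dots> \<le> (\<Sum>k. ennreal (2 * exp (1 / 2) * C * K * (2^k * exp (2 * real k * B - 2^k / 2))))"
    by (intro suminf_le annulus) auto
  also have "\<dots> = ennreal (2 * exp (1 / 2) * C * K * (\<Sum>k. 2^k * exp (2 * real k * B - 2^k / 2)))"
    using \<open>0 \<le> C\<close> \<open>0 \<le> K\<close>
    by (simp add: suminf_ennreal2 summable_mult summable_dyadic_exp suminf_mult)
  finally show ?thesis .
qed

theorem lemma2p6:
  fixes p C0 CJN C :: real and \<phi> u0 :: "real \<Rightarrow> complex"
  assumes "p > 1"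
    and "JN_constants C0 CJN"
    and "\<phi> \<in> borel_measurable lborel"
    and "C > 0" and "\<And>x. cmod (\<phi> x) \<le> C * exp (- \<bar>x\<bar>)"
    and "in_Bp p u0" and "\<And>t. Im (u0 t) = 0"
  shows "(\<exists>K > 0. \<forall>u. in_Bp p u \<and> Bp_norm p (u - u0) \<le> CJN / 4 \<longrightarrow>
            (\<forall>a b. a < b \<longrightarrow>
               (\<integral>\<^sup>+ t\<in>{a<..<b}. ennreal (exp (cmod (u t - avg u a b))) \<partial>lborel) / ennreal (b - a)
                 \<le> ennreal K))
       \<and> (\<exists>K' > 0. \<forall>u. in_Bp p u \<and> Bp_norm p (u - u0) \<le> CJN / 4 \<longrightarrow>
            (\<forall>x y. y > 0 \<longrightarrow>
               (\<integral>\<^sup>+ t. ennreal (cmod (\<phi> ((x - t) / y)) / y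
                   * exp (cmod (u t - avg u (x - y) (x + y)))) \<partial>lborel) \<le> ennreal K'))"
proof -
  obtain B K where "0 \<le> B" "0 < K" and bounds: "\<And>u. in_Bp p u \<Longrightarrow> Bp_norm p (u - u0) \<le> CJN / 4 \<Longrightarrow>
       (\<forall>a b. set_integrable lborel {a<..<b} u) \<and> bmo_norm u \<le> ennreal B \<and>
       (\<forall>a b. a < b \<longrightarrow>
          (\<integral>\<^sup>+ t\<in>{a<..<b}. ennreal (exp (cmod (u t - avg u a b))) \<partial>lborel) \<le> ennreal ((b - a) * K))"
    using Bp_ball_uniform_osc_bounds[OF assms(1,2,6,7)] by blast
  define K' where "K' = 2 * exp (1 / 2) * C * K * (\<Sum>k. 2^k * exp (2 * real k * B - 2^k / 2))"
  have "0 < K'"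
    unfolding K'_def using assms(4) \<open>0 < K\<close> by (simp add: suminf_pos summable_dyadic_exp)
  have "(\<integral>\<^sup>+ t\<in>{a<..<b}. ennreal (exp (cmod (u t - avg u a b))) \<partial>lborel) / ennreal (b - a)
      \<le> ennreal K"
    if "in_Bp p u" "Bp_norm p (u - u0) \<le> CJN / 4" "a < b" for u a b
    using bounds[OF that(1,2)] that(3) \<open>0 < K\<close> by (simp add: ennreal_divide_le_iff)
  moreover have "(\<integral>\<^sup>+ t. ennreal (cmod (\<phi> ((x - t) / y)) / y
      * exp (cmod (u t - avg u (x - y) (x + y)))) \<partial>lborel) \<le> ennreal K'"
    if "in_Bp p u" "Bp_norm p (u - u0) \<le> CJN / 4" "0 < y" for u x y
    unfolding K'_def using bounds[OF that(1,2)] that(1,3) assms(3,5) \<open>0 \<le> B\<close> \<open>0 < K\<close>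
    by (intro kernel_integral_exp_osc_le) (auto simp: in_Bp_def)
  ultimately show ?thesis
    using \<open>0 < K\<close> \<open>0 < K'\<close> by blast
qed

end
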